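(* Let $\widetilde{\mathcal{A}}^+,\widetilde{\mathcal{A}}^-\subseteq\mathbb{R}^d$ be compact and linearly separable, with $$\tilde d:=\max_{\|y\|_*\le1,\ b\in\mathbb{R}} h(y,b;\widetilde{\mathcal{A}}^+,\widetilde{\mathcal{A}}^-)>0,$$ and let $(\tilde y,\tilde b)$ be an optimal solution. Then there exist $\tilde x^+\in\operatorname{conv}(\widetilde{\mathcal{A}}^+)$ and $\tilde x^-\in\operatorname{conv}(\widetilde{\mathcal{A}}^-)$ such that $\tilde y^\top(\tilde x^+-\tilde x^-)=\|\tilde x^+-\tilde x^-\|\,\|\tilde y\|_*$ and $\tilde d\,\|\tilde y\|_*=\tilde y^\top\tilde x^++\tilde b=-\tilde y^\top\tilde x^--\tilde b$; consequently $\tilde d=\|\tilde x^+-\tilde x^-\|/2$ and $\tilde b=-\tilde y^\top(\tilde x^++\tilde x^-)/2$. Furthermore, suppose the norm $\|\cdot\|$ and its dual are strictly convex. If $(\bar y,\bar b)$ satisfies $h(\bar y,\bar b;\widetilde{\mathcal{A}}^+,\widetilde{\mathcal{A}}^-)\ge\bar d>0$, then $\bar y^\top v(\tilde y)\ge \bar d/\tilde d>0$.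
   Context: $\|\cdot\|$ is a norm on $\mathbb{R}^d$ with dual norm $\|y\|_*=\max_{\|w\|\le1}y^\top w$. For $y\ne0$, $v(y)$ denotes a maximizer of $y^\top w$ over $\|w\|\le1$ (unique when $\|\cdot\|$ is strictly convex). Strict convexity of a norm $N$: $N(\beta w+(1-\beta)z)<\beta N(w)+(1-\beta)N(z)$ whenever $\beta\in(0,1)$ and $w,z$ are not collinear. Margin function: $h(y,b;\widetilde{\mathcal{A}}^+,\widetilde{\mathcal{A}}^-)=\min\{\min_{x\in\widetilde{\mathcal{A}}^+}(y^\top x+b),\ \min_{x\in\widetilde{\mathcal{A}}^-}(-y^\top x-b)\}$. *)

theory Defs
  imports "HOL-Analysis.Analysis"
begin

definition is_norm :: "('a::real_vector \<Rightarrow> real) \<Rightarrow> bool" where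
  "is_norm N \<longleftrightarrow>
     (\<forall>x. N x = 0 \<longleftrightarrow> x = 0) \<and>
     (\<forall>c x. N (c *\<^sub>R x) = \<bar>c\<bar> * N x) \<and>
     (\<forall>x y. N (x + y) \<le> N x + N y)"

definition dual_norm :: "('a::real_inner \<Rightarrow> real) \<Rightarrow> 'a \<Rightarrow> real" where
  "dual_norm N y = Sup ((\<lambda>w. y \<bullet> w) ` {w. N w \<le> 1})"

text \<open>v(y): a maximizer of y^T w over the unit ball of N (unique under strict convexity).\<close>
definition vmax :: "('a::real_inner \<Rightarrow> real) \<Rightarrow> 'a \<Rightarrow> 'a" where
  "vmax N y = (SOME w. N w \<le> 1 \<and> (\<forall>z. N z \<le> 1 \<longrightarrow> y \<bullet> z \<le> y \<bullet> w))"

definition strictly_convex_norm :: "('a::euclidean_space \<Rightarrow> real) \<Rightarrow> bool" where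
  "strictly_convex_norm N \<longleftrightarrow>
     (\<forall>\<beta> w z. 0 < \<beta> \<and> \<beta> < 1 \<and> \<not> collinear {0, w, z} \<longrightarrow>
        N (\<beta> *\<^sub>R w + (1 - \<beta>) *\<^sub>R z) < \<beta> * N w + (1 - \<beta>) * N z)"

definition margin :: "'a::real_inner \<Rightarrow> real \<Rightarrow> 'a set \<Rightarrow> 'a set \<Rightarrow> real" where
  "margin y b Ap Am =
     min (Inf ((\<lambda>x. y \<bullet> x + b) ` Ap)) (Inf ((\<lambda>x. - (y \<bullet> x) - b) ` Am))"

definition lin_separable :: "'a::real_inner set \<Rightarrow> 'a set \<Rightarrow> bool" where
  "lin_separable Ap Am \<longleftrightarrow>
     (\<exists>y b. (\<forall>x\<in>Ap. y \<bullet> x + b > 0) \<and> (\<forall>x\<in>Am. y \<bullet> x + b < 0))"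

end

theory Submission
  imports Defs
begin

text \<open>Let \<open>x\<^sup>+ - x\<^sup>-\<close> minimise \<open>N\<close> over \<open>conv A\<^sup>+ - conv A\<^sup>-\<close>, with value \<open>\<delta>\<close>.
  Separating this difference set from the \<open>N\<close>-ball of any radius \<open>r < \<delta>\<close> yields a
  functional of dual norm at most 1 that separates \<open>A\<^sup>+\<close> from \<open>A\<^sup>-\<close> with gap \<open>r\<close>,
  hence with margin \<open>r/2\<close>; so \<open>\<delta> \<le> 2d\<close>. Conversely the optimal \<open>(y, b)\<close> satisfies
  \<open>2d \<le> y \<bullet> (x\<^sup>+ - x\<^sup>-) \<le> \<delta> \<parallel>y\<parallel>\<^sub>* \<le> \<delta>\<close>, so all of these are equalities.
  Then \<open>(x\<^sup>+ - x\<^sup>-) / \<delta>\<close> maximises \<open>y\<close> over the unit ball of \<open>N\<close>, and by strict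
  convexity of \<open>N\<close> it is the only maximiser \<open>v(y)\<close>; finally any \<open>(y', b')\<close> of margin
  \<open>d'\<close> has \<open>y' \<bullet> (x\<^sup>+ - x\<^sup>-) \<ge> 2d'\<close>.\<close>

lemma is_norm_scaleR: "is_norm N \<Longrightarrow> N (c *\<^sub>R x) = \<bar>c\<bar> * N x"
  unfolding is_norm_def by blast

lemma is_norm_triangle: "is_norm N \<Longrightarrow> N (x + y) \<le> N x + N y"
  unfolding is_norm_def by blast

lemma is_norm_eq_zero_iff: "is_norm N \<Longrightarrow> N x = 0 \<longleftrightarrow> x = 0"
  unfolding is_norm_def by blast

lemma is_norm_zero: "is_norm N \<Longrightarrow> N 0 = 0"
  by (simp add: is_norm_eq_zero_iff)

lemma is_norm_nonneg:
  assumes "is_norm N" shows "0 \<le> N x"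
  using is_norm_triangle[OF assms, of x "-x"] is_norm_scaleR[OF assms, of "-1" x]
  by (simp add: is_norm_zero[OF assms])

lemma is_norm_pos: "is_norm N \<Longrightarrow> x \<noteq> 0 \<Longrightarrow> 0 < N x"
  using is_norm_eq_zero_iff is_norm_nonneg by (metis order_le_less)

lemma convex_on_is_norm:
  assumes "is_norm N" shows "convex_on UNIV N"
proof (rule convex_onI)
  fix t :: real and x y assume "0 < t" "t < 1"
  have "N ((1 - t) *\<^sub>R x + t *\<^sub>R y) \<le> N ((1 - t) *\<^sub>R x) + N (t *\<^sub>R y)"
    by (rule is_norm_triangle[OF assms])
  also have "\<dots> = (1 - t) * N x + t * N y"
    using \<open>0 < t\<close> \<open>t < 1\<close> by (simp add: is_norm_scaleR[OF assms])
  finally show "N ((1 - t) *\<^sub>R x + t *\<^sub>R y) \<le> (1 - t) * N x + t * N y" .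
qed simp

lemma convex_is_norm_ball:
  assumes "is_norm N" shows "convex {w. N w \<le> r}"
proof (rule convexI)
  fix x y assume "x \<in> {w. N w \<le> r}" "y \<in> {w. N w \<le> r}"
  fix u v :: real assume uv: "0 \<le> u" "0 \<le> v" "u + v = 1"
  have "N (u *\<^sub>R x + v *\<^sub>R y) \<le> u * N x + v * N y"
    using is_norm_triangle[OF assms, of "u *\<^sub>R x" "v *\<^sub>R y"] uv by (simp add: is_norm_scaleR[OF assms])
  also have "\<dots> \<le> u * r + v * r"
    using \<open>x \<in> _\<close> \<open>y \<in> _\<close> uv by (intro add_mono mult_left_mono) auto
  also have "\<dots> = r" using uv by (metis distrib_right mult_1_left)
  finally show "u *\<^sub>R x + v *\<^sub>R y \<in> {w. N w \<le> r}" by simp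
qed

lemma continuous_on_is_norm:
  fixes N :: "'a::euclidean_space \<Rightarrow> real"
  assumes "is_norm N" shows "continuous_on S N"
  using convex_on_continuous[OF open_UNIV convex_on_is_norm[OF assms]] continuous_on_subset
  by blast

lemma is_norm_ge_scaled_norm:
  fixes N :: "'a::euclidean_space \<Rightarrow> real"
  assumes "is_norm N" shows "\<exists>c>0. \<forall>x. c * norm x \<le> N x"
proof -
  obtain b :: 'a where "b \<in> Basis" using nonempty_Basis by blast
  then have ne: "sphere (0::'a) 1 \<noteq> {}" by (auto simp: norm_Basis)
  obtain x0 where x0: "x0 \<in> sphere 0 1" "\<And>x. x \<in> sphere 0 1 \<Longrightarrow> N x0 \<le> N x"
    using continuous_attains_inf[OF compact_sphere ne continuous_on_is_norm[OF assms]] by blast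
  have bound: "N x0 * norm x \<le> N x" for x
  proof (cases "x = 0")
    case False
    then have "N x0 \<le> N ((1 / norm x) *\<^sub>R x)" by (intro x0(2)) simp
    also have "\<dots> = N x / norm x" by (simp add: is_norm_scaleR[OF assms])
    finally show ?thesis using False by (simp add: field_simps)
  qed (simp add: is_norm_zero[OF assms])
  have "N x0 > 0" using x0(1) by (intro is_norm_pos[OF assms]) auto
  then show ?thesis using bound by blast
qed

lemma bdd_above_inner_is_norm_ball:
  fixes N :: "'a::euclidean_space \<Rightarrow> real"
  assumes "is_norm N" shows "bdd_above ((\<lambda>w. y \<bullet> w) ` {w. N w \<le> 1})"
proof -
  obtain c where c: "c > 0" "\<And>x. c * norm x \<le> N x" using is_norm_ge_scaled_norm[OF assms] by blast
  have "y \<bullet> w \<le> norm y / c" if "N w \<le> 1" for w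
  proof -
    have "y \<bullet> w \<le> norm y * norm w" by (rule order_trans[OF abs_ge_self Cauchy_Schwarz_ineq2])
    also have "\<dots> \<le> norm y * (1 / c)"
    proof (rule mult_left_mono)
      have "c * norm w \<le> 1" using c(2) that by (rule order_trans)
      then show "norm w \<le> 1 / c" using c(1) by (simp add: field_simps)
    qed simp
    finally show ?thesis by simp
  qed
  then show ?thesis by (intro bdd_aboveI2) auto
qed

lemma inner_le_dual_norm_mult:
  fixes N :: "'a::euclidean_space \<Rightarrow> real"
  assumes "is_norm N" shows "y \<bullet> w \<le> dual_norm N y * N w"
proof (cases "w = 0")
  case False
  then have p: "N w > 0" by (rule is_norm_pos[OF assms])
  then have "N ((1 / N w) *\<^sub>R w) \<le> 1" by (simp add: is_norm_scaleR[OF assms])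
  then have "y \<bullet> ((1 / N w) *\<^sub>R w) \<le> dual_norm N y"
    unfolding dual_norm_def
    by (intro cSup_upper bdd_above_inner_is_norm_ball[OF assms]) (use p in \<open>auto simp del: inner_scaleR_right\<close>)
  then show ?thesis using p by (simp add: field_simps)
qed (simp add: is_norm_zero[OF assms])

lemma dual_norm_le:
  assumes "is_norm N" "\<And>w. N w \<le> 1 \<Longrightarrow> y \<bullet> w \<le> k"
  shows "dual_norm N y \<le> k"
  unfolding dual_norm_def
proof (rule cSup_least)
  have "0 \<in> {w. N w \<le> 1}" using is_norm_zero[OF assms(1)] by simp
  then show "(\<bullet>) y ` {w. N w \<le> 1} \<noteq> {}" by blast
qed (use assms(2) in auto)

lemma dual_unit_functional_separating:
  fixes N :: "'a::euclidean_space \<Rightarrow> real"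
  assumes norm: "is_norm N" and "convex D" "D \<noteq> {}" "0 < r" and far: "\<And>z. z \<in> D \<Longrightarrow> r < N z"
  shows "\<exists>y. dual_norm N y \<le> 1 \<and> (\<forall>z\<in>D. r \<le> y \<bullet> z)"
proof -
  have "{w. N w \<le> r} \<inter> D = {}" using far by force
  moreover have "0 \<in> {w. N w \<le> r}" using \<open>0 < r\<close> is_norm_zero[OF norm] by simp
  then have "{w. N w \<le> r} \<noteq> {}" by blast
  ultimately obtain a c where "a \<noteq> 0" and ball: "\<forall>w\<in>{w. N w \<le> r}. a \<bullet> w \<le> c"
    and set: "\<forall>z\<in>D. c \<le> a \<bullet> z"
    using separating_hyperplane_sets[OF convex_is_norm_ball[OF norm] \<open>convex D\<close> _ \<open>D \<noteq> {}\<close>] by blast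
  define k where "k = dual_norm N a"
  have "a \<bullet> w \<le> c / r" if "N w \<le> 1" for w
  proof -
    have "N (r *\<^sub>R w) \<le> r" using that \<open>0 < r\<close> by (simp add: is_norm_scaleR[OF norm] mult_left_le)
    then have "a \<bullet> (r *\<^sub>R w) \<le> c" using ball by blast
    then show ?thesis using \<open>0 < r\<close> by (simp add: field_simps)
  qed
  then have "k \<le> c / r" unfolding k_def by (rule dual_norm_le[OF norm])
  then have kr: "k * r \<le> c" using \<open>0 < r\<close> by (simp add: pos_le_divide_eq)
  have "0 < a \<bullet> a" using \<open>a \<noteq> 0\<close> by simp
  also have "\<dots> \<le> k * N a" unfolding k_def by (rule inner_le_dual_norm_mult[OF norm])
  finally have k: "0 < k" using is_norm_nonneg[OF norm, of a] by (simp add: zero_less_mult_iff)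
  show ?thesis
  proof (intro exI conjI ballI)
    show "dual_norm N ((1 / k) *\<^sub>R a) \<le> 1"
    proof (rule dual_norm_le[OF norm])
      fix w assume "N w \<le> 1"
      have "a \<bullet> w \<le> k * N w" unfolding k_def by (rule inner_le_dual_norm_mult[OF norm])
      also have "\<dots> \<le> k" using \<open>N w \<le> 1\<close> k by (simp add: mult_left_le)
      finally show "(1 / k) *\<^sub>R a \<bullet> w \<le> 1" using k by (simp add: field_simps)
    qed
    show "r \<le> (1 / k) *\<^sub>R a \<bullet> z" if "z \<in> D" for z
      using order_trans[OF kr bspec[OF set that]] k by (simp add: field_simps)
  qed
qed

lemma margin_ge_iff:
  fixes y :: "'a::real_inner"
  assumes "compact Ap" "compact Am" "Ap \<noteq> {}" "Am \<noteq> {}"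
  shows "d \<le> margin y b Ap Am \<longleftrightarrow> (\<forall>x\<in>Ap. d \<le> y \<bullet> x + b) \<and> (\<forall>x\<in>Am. d \<le> - (y \<bullet> x) - b)"
proof -
  have "bdd_below ((\<lambda>x. y \<bullet> x + b) ` Ap)" "bdd_below ((\<lambda>x. - (y \<bullet> x) - b) ` Am)"
    using assms(1,2) by (auto intro!: bounded_imp_bdd_below compact_imp_bounded
        compact_continuous_image continuous_intros)
  then show ?thesis using assms(3,4) unfolding margin_def by (simp add: le_cInf_iff)
qed

lemma margin_ge_on_convex_hull:
  fixes y :: "'a::real_inner"
  assumes "compact Ap" "compact Am" "Ap \<noteq> {}" "Am \<noteq> {}" "d \<le> margin y b Ap Am"
  shows "\<And>x. x \<in> convex hull Ap \<Longrightarrow> d \<le> y \<bullet> x + b"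
    and "\<And>x. x \<in> convex hull Am \<Longrightarrow> d \<le> - (y \<bullet> x) - b"
proof -
  have "Ap \<subseteq> {x. d - b \<le> y \<bullet> x}" "Am \<subseteq> {x. y \<bullet> x \<le> - d - b}"
    using assms by (auto simp: margin_ge_iff)
  then have "convex hull Ap \<subseteq> {x. d - b \<le> y \<bullet> x}" "convex hull Am \<subseteq> {x. y \<bullet> x \<le> - d - b}"
    by (simp_all add: hull_minimal convex_halfspace_ge convex_halfspace_le)
  then show "\<And>x. x \<in> convex hull Ap \<Longrightarrow> d \<le> y \<bullet> x + b"
    and "\<And>x. x \<in> convex hull Am \<Longrightarrow> d \<le> - (y \<bullet> x) - b" by auto
qed

lemma margin_ge_half_gap:
  fixes y :: "'a::real_inner"
  assumes "compact Ap" "compact Am" "Ap \<noteq> {}" "Am \<noteq> {}"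
    and gap: "\<And>u v. u \<in> Ap \<Longrightarrow> v \<in> Am \<Longrightarrow> r \<le> y \<bullet> u - y \<bullet> v"
  obtains b where "r / 2 \<le> margin y b Ap Am"
proof -
  have cont: "continuous_on S (\<lambda>x. y \<bullet> x)" for S by (intro continuous_intros)
  obtain u where u: "u \<in> Ap" "\<And>x. x \<in> Ap \<Longrightarrow> y \<bullet> u \<le> y \<bullet> x"
    using continuous_attains_inf[OF assms(1,3) cont] by blast
  obtain v where v: "v \<in> Am" "\<And>x. x \<in> Am \<Longrightarrow> y \<bullet> x \<le> y \<bullet> v"
    using continuous_attains_sup[OF assms(2,4) cont] by blast
  have "r / 2 \<le> margin y (- (y \<bullet> u + y \<bullet> v) / 2) Ap Am"
    unfolding margin_ge_iff[OF assms(1-4)]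
    using gap[OF u(1) v(1)] u(2) v(2) by (fastforce simp: field_simps)
  then show thesis by (rule that)
qed

lemma is_norm_attains_min_difference:
  fixes N :: "'a::euclidean_space \<Rightarrow> real"
  assumes "is_norm N" "compact A" "compact B" "A \<noteq> {}" "B \<noteq> {}"
  shows "\<exists>a\<in>A. \<exists>b\<in>B. \<forall>u\<in>A. \<forall>v\<in>B. N (a - b) \<le> N (u - v)"
proof -
  have "continuous_on (A \<times> B) (N \<circ> (\<lambda>p. fst p - snd p))"
    by (intro continuous_on_compose continuous_intros continuous_on_is_norm[OF assms(1)])
  moreover have "compact (A \<times> B)" "A \<times> B \<noteq> {}" using assms(2-5) by (simp_all add: compact_Times)
  ultimately have "\<exists>p\<in>A \<times> B. \<forall>q\<in>A \<times> B. (N \<circ> (\<lambda>p. fst p - snd p)) p \<le> (N \<circ> (\<lambda>p. fst p - snd p)) q"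
    by (intro continuous_attains_inf)
  then show ?thesis by (simp add: Bex_def Ball_def mem_Times_iff) blast
qed

lemma norm_difference_le_twice_max_margin:
  fixes N :: "'a::euclidean_space \<Rightarrow> real"
  assumes norm: "is_norm N" and cpt: "compact Ap" "compact Am" "Ap \<noteq> {}" "Am \<noteq> {}" and "0 \<le> d"
    and max: "\<And>y b. dual_norm N y \<le> 1 \<Longrightarrow> margin y b Ap Am \<le> d"
    and min: "\<And>u v. u \<in> convex hull Ap \<Longrightarrow> v \<in> convex hull Am \<Longrightarrow> \<delta> \<le> N (u - v)"
  shows "\<delta> \<le> 2 * d"
proof (rule dense_le)
  fix r assume "r < \<delta>"
  show "r \<le> 2 * d"
  proof (cases "0 < r")
    case True
    define D where "D = (\<Union>u \<in> convex hull Ap. \<Union>v \<in> convex hull Am. {u - v})"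
    have "convex D" unfolding D_def by (intro convex_differences convex_convex_hull)
    moreover have "D \<noteq> {}" using cpt(3,4) unfolding D_def by (auto dest: hull_inc)
    moreover have "r < N z" if "z \<in> D" for z
    proof -
      obtain u v where "u \<in> convex hull Ap" "v \<in> convex hull Am" "z = u - v"
        using \<open>z \<in> D\<close> unfolding D_def by blast
      then show ?thesis using min \<open>r < \<delta>\<close> by fastforce
    qed
    ultimately obtain y where y: "dual_norm N y \<le> 1" "\<forall>z\<in>D. r \<le> y \<bullet> z"
      using dual_unit_functional_separating[OF norm _ _ True] by blast
    have "r \<le> y \<bullet> u - y \<bullet> v" if "u \<in> Ap" "v \<in> Am" for u v
      using y(2) hull_inc[OF that(1)] hull_inc[OF that(2)]
      unfolding D_def by (auto simp: inner_diff_right)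
    then obtain b where "r / 2 \<le> margin y b Ap Am" by (rule margin_ge_half_gap[OF cpt])
    with max[OF y(1), of b] show ?thesis by linarith
  qed (use \<open>0 \<le> d\<close> in simp)
qed

lemma max_margin_eq_half_min_difference:
  fixes N :: "'a::euclidean_space \<Rightarrow> real"
  assumes norm: "is_norm N" and cpt: "compact Ap" "compact Am" "Ap \<noteq> {}" "Am \<noteq> {}" and "0 < d"
    and feas: "dual_norm N y \<le> 1" and opt: "d \<le> margin y b Ap Am"
    and max: "\<And>y b. dual_norm N y \<le> 1 \<Longrightarrow> margin y b Ap Am \<le> d"
    and xp: "xp \<in> convex hull Ap" and xm: "xm \<in> convex hull Am"
    and min: "\<And>u v. u \<in> convex hull Ap \<Longrightarrow> v \<in> convex hull Am \<Longrightarrow> N (xp - xm) \<le> N (u - v)"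
  shows "N (xp - xm) = 2 * d" "dual_norm N y = 1" "y \<bullet> xp + b = d" "- (y \<bullet> xm) - b = d"
proof -
  have "N (xp - xm) \<le> 2 * d"
    using norm_difference_le_twice_max_margin[OF norm cpt _ max min] \<open>0 < d\<close> by simp
  moreover have "d \<le> y \<bullet> xp + b" "d \<le> - (y \<bullet> xm) - b"
    using margin_ge_on_convex_hull[OF cpt opt] xp xm by simp_all
  moreover have "y \<bullet> xp - y \<bullet> xm \<le> dual_norm N y * N (xp - xm)"
    using inner_le_dual_norm_mult[OF norm, of y "xp - xm"] by (simp add: inner_diff_right)
  moreover have "dual_norm N y * N (xp - xm) \<le> N (xp - xm)"
    using mult_right_mono[OF feas is_norm_nonneg[OF norm]] by simp
  ultimately have "N (xp - xm) = 2 * d" "y \<bullet> xp + b = d" "- (y \<bullet> xm) - b = d"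
    "dual_norm N y * N (xp - xm) = N (xp - xm)"
    by linarith+
  then show "N (xp - xm) = 2 * d" "dual_norm N y = 1" "y \<bullet> xp + b = d" "- (y \<bullet> xm) - b = d"
    using \<open>0 < d\<close> by simp_all
qed

lemma vmax_eqI:
  fixes N :: "'a::euclidean_space \<Rightarrow> real"
  assumes norm: "is_norm N" and sc: "strictly_convex_norm N"
    and "dual_norm N y \<le> 1" "N u = 1" "y \<bullet> u = 1"
  shows "vmax N y = u"
proof -
  have le_N: "y \<bullet> z \<le> N z" for z
  proof -
    have "dual_norm N y * N z \<le> 1 * N z"
      using \<open>dual_norm N y \<le> 1\<close> is_norm_nonneg[OF norm] by (rule mult_right_mono)
    then show ?thesis using inner_le_dual_norm_mult[OF norm, of y z] by simp
  qed
  have "\<exists>w. N w \<le> 1 \<and> (\<forall>z. N z \<le> 1 \<longrightarrow> y \<bullet> z \<le> y \<bullet> w)"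
    using assms(4,5) le_N by (metis order_refl order_trans)
  from someI_ex[OF this] have v: "N (vmax N y) \<le> 1" "\<And>z. N z \<le> 1 \<Longrightarrow> y \<bullet> z \<le> y \<bullet> vmax N y"
    unfolding vmax_def by blast+
  define v where "v = vmax N y"
  have yv: "y \<bullet> v = 1" and Nv: "N v = 1"
    using v(1) v(2)[of u] le_N[of v] assms(4,5) unfolding v_def by linarith+
  show ?thesis unfolding v_def[symmetric]
  proof (rule ccontr)
    assume "v \<noteq> u"
    show False
    proof (cases "collinear {0, v, u}")
      case True
      have "v \<noteq> 0" "u \<noteq> 0" using Nv assms(4) is_norm_zero[OF norm] by auto
      then obtain t where t: "u = t *\<^sub>R v" using True by (metis collinear_lemma)
      then have "\<bar>t\<bar> = 1" using Nv assms(4) by (simp add: is_norm_scaleR[OF norm])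
      then have "t = 1 \<or> t = -1" by linarith
      then show False using \<open>v \<noteq> u\<close> t yv assms(5) by auto
    next
      case False
      text \<open>The midpoint of two distinct maximisers would lie strictly inside the unit ball.\<close>
      define m where "m = (1/2) *\<^sub>R v + (1 - 1/2) *\<^sub>R u"
      have "N m < 1/2 * N v + (1 - 1/2) * N u"
        using sc[unfolded strictly_convex_norm_def, rule_format, of "1/2" v u] False
        unfolding m_def by simp
      then have "N m < 1" using Nv assms(4) by simp
      moreover have "y \<bullet> m = 1" using yv assms(5) unfolding m_def by (simp add: inner_add_right)
      ultimately show False using le_N[of m] by linarith
    qed
  qed
qed

theorem mainTheorem5:
  fixes N :: "real^'d \<Rightarrow> real"
    and Ap Am :: "(real^'d) set"
    and yt :: "real^'d" and bt dt :: real
  assumes norm: "is_norm N"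
    and nonempty: "Ap \<noteq> {}" "Am \<noteq> {}"
    and compact: "compact Ap" "compact Am"
    and sep: "lin_separable Ap Am"
    and dt_pos: "dt > 0"
    and opt_feas: "dual_norm N yt \<le> 1"
    and opt_val: "margin yt bt Ap Am = dt"
    and opt_max: "\<And>y b. dual_norm N y \<le> 1 \<Longrightarrow> margin y b Ap Am \<le> dt"
  shows "(\<exists>xp \<in> convex hull Ap. \<exists>xm \<in> convex hull Am.
            yt \<bullet> (xp - xm) = N (xp - xm) * dual_norm N yt \<and>
            dt * dual_norm N yt = yt \<bullet> xp + bt \<and>
            dt * dual_norm N yt = - (yt \<bullet> xm) - bt \<and>
            dt = N (xp - xm) / 2 \<and>
            bt = - (yt \<bullet> (xp + xm)) / 2)
       \<and> (strictly_convex_norm N \<and> strictly_convex_norm (dual_norm N) \<longrightarrow>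
            (\<forall>yb bb db. margin yb bb Ap Am \<ge> db \<and> db > 0 \<longrightarrow>
                yb \<bullet> vmax N yt \<ge> db / dt \<and> db / dt > 0))"
proof -
  obtain xp xm where xp: "xp \<in> convex hull Ap" and xm: "xm \<in> convex hull Am"
    and min: "\<forall>u\<in>convex hull Ap. \<forall>v\<in>convex hull Am. N (xp - xm) \<le> N (u - v)"
    using is_norm_attains_min_difference[OF norm compact_convex_hull compact_convex_hull] compact nonempty
    by (metis convex_hull_eq_empty)
  have dist: "N (xp - xm) = 2 * dt" and dual: "dual_norm N yt = 1"
    and plus: "yt \<bullet> xp + bt = dt" and minus: "- (yt \<bullet> xm) - bt = dt"
    using max_margin_eq_half_min_difference[OF norm compact nonempty dt_pos opt_feas
        opt_val[symmetric, THEN eq_refl] opt_max xp xm min[rule_format]] by simp_all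
  have vmax_bound: "db / dt \<le> yb \<bullet> vmax N yt"
    if "strictly_convex_norm N" "db \<le> margin yb bb Ap Am" for yb bb db
  proof -
    have "db \<le> yb \<bullet> xp + bb" "db \<le> - (yb \<bullet> xm) - bb"
      using margin_ge_on_convex_hull[OF compact nonempty that(2)] xp xm by blast+
    then have gap: "2 * db \<le> yb \<bullet> (xp - xm)" by (simp add: inner_diff_right)
    have v: "vmax N yt = (1 / (2 * dt)) *\<^sub>R (xp - xm)"
      using vmax_eqI[OF norm that(1) opt_feas] dist plus minus dt_pos
      by (simp add: is_norm_scaleR[OF norm] inner_diff_right)
    have "db / dt = (2 * db) / (2 * dt)" by simp
    also have "\<dots> \<le> yb \<bullet> (xp - xm) / (2 * dt)" using dt_pos by (intro divide_right_mono gap) simp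
    also have "\<dots> = yb \<bullet> vmax N yt" unfolding v by simp
    finally show ?thesis .
  qed
  have "yt \<bullet> (xp - xm) = N (xp - xm) * dual_norm N yt \<and>
      dt * dual_norm N yt = yt \<bullet> xp + bt \<and> dt * dual_norm N yt = - (yt \<bullet> xm) - bt \<and>
      dt = N (xp - xm) / 2 \<and> bt = - (yt \<bullet> (xp + xm)) / 2"
    unfolding dual mult_1_right inner_diff_right inner_add_right using dist plus minus by argo
  then show ?thesis
    using xp xm vmax_bound dt_pos by (blast intro: divide_pos_pos)
qed

end
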